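(* Let $\mathcal{G}=(\mathcal{N},\mathcal{E})$ be a finite simple undirected graph with vertex set $\mathcal{N}=\{1,\dots,N\}$. Let $\mathbb{T}^N=(\mathbb{R}/2\pi\mathbb{Z})^N$ and $$\mathbb{T}^N_0(\mathcal{G}):=\{\theta=(\theta_1,\dots,\theta_N)\in\mathbb{T}^N:\ \theta_i\neq\theta_j \text{ for all } \{i,j\}\in\mathcal{E}\},$$ and let $R_0(\mathcal{G})$ denote the number of connected components of $\mathbb{T}^N_0(\mathcal{G})$. Then: (i) if $\mathcal{G}=T$ is a tree on $N\ge 1$ vertices, $R_0(T)=1$; (ii) if $\mathcal{G}=C_N$ is the cycle graph on $N\ge 3$ vertices, $R_0(C_N)=N-1$.
   Context: $\mathbb{T}^N_0(\mathcal{G})$ is the configuration space of $N$ agents on the circle in which agents joined by an edge of $\mathcal{G}$ never coincide (the region left forward-invariant by repulsive couplings with barriers at zero separation). The cycle graph $C_N$ has edges $\{k,k+1\}$ for $k=1,\dots,N-1$ and $\{N,1\}$. *)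

theory Defs
  imports "HOL-Analysis.Analysis"
begin

text \<open>The circle R/2piZ is represented by the unit circle in the complex plane
  (via theta maps to exp(i theta), a homeomorphism).\<close>

definition torus :: "nat \<Rightarrow> (nat \<Rightarrow> complex) topology" where
  "torus N = product_topology (\<lambda>i. top_of_set (sphere (0::complex) 1)) {1..N}"

definition simple_graph :: "nat \<Rightarrow> nat set set \<Rightarrow> bool" where
  "simple_graph N E \<longleftrightarrow>
     (\<forall>e\<in>E. \<exists>i j. e = {i, j} \<and> i \<noteq> j \<and> i \<in> {1..N} \<and> j \<in> {1..N})"

definition graph_connected :: "nat \<Rightarrow> nat set set \<Rightarrow> bool" where
  "graph_connected N E \<longleftrightarrow>
     (\<forall>i\<in>{1..N}. \<forall>j\<in>{1..N}. (i, j) \<in> {(a, b). {a, b} \<in> E}\<^sup>*)"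

definition has_cycle :: "nat set set \<Rightarrow> bool" where
  "has_cycle E \<longleftrightarrow>
     (\<exists>vs. length vs \<ge> 3 \<and> distinct vs \<and>
        (\<forall>k. k + 1 < length vs \<longrightarrow> {vs ! k, vs ! (k + 1)} \<in> E) \<and>
        {last vs, hd vs} \<in> E)"

definition is_tree :: "nat \<Rightarrow> nat set set \<Rightarrow> bool" where
  "is_tree N E \<longleftrightarrow> simple_graph N E \<and> graph_connected N E \<and> \<not> has_cycle E"

definition cycle_graph :: "nat \<Rightarrow> nat set set" where
  "cycle_graph N = {{k, k + 1} | k. 1 \<le> k \<and> k < N} \<union> {{N, 1}}"

definition config0 :: "nat \<Rightarrow> nat set set \<Rightarrow> (nat \<Rightarrow> complex) set" where
  "config0 N E = {\<theta> \<in> topspace (torus N). \<forall>i j. {i, j} \<in> E \<longrightarrow> \<theta> i \<noteq> \<theta> j}"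

definition R0 :: "nat \<Rightarrow> nat set set \<Rightarrow> nat" where
  "R0 N E = card (connected_components_of (subtopology (torus N) (config0 N E)))"

end

theory Submission
  imports Defs "HOL-Library.Transitive_Closure_Table"
begin

text \<open>
  Forests are handled by adding edges one at a time. If the edge {a, b} joins two different
  components of the forest F, the configurations avoiding it are exactly the images of the pairs
  (theta, t) in config0 F x (0, 2 pi) under the map that rigidly rotates the component of b until
  theta_b = theta_a exp(i t). This map is continuous, so connectedness propagates from the whole
  torus (no edges) to every forest, in particular to every tree.

  On the cycle, let alpha_k in (0, 2 pi) be the counterclockwise angle from theta_k to
  theta_(k+1), indices taken mod N. Their sum, the winding of theta, is a continuous function on the
  configuration space with values in 2 pi {1, ..., N - 1}, and every such value is attained.
  A configuration is determined by theta_1 and the angles alpha_k, so a level set of the winding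
  is path connected: move theta_1 along the circle and interpolate the angle vectors linearly.
  Hence the connected components are exactly the N - 1 level sets.
\<close>

lemma card_connected_components_of_eq_card_image:
  fixes f :: "'a \<Rightarrow> 'b::metric_space"
  assumes cont: "continuous_map X euclidean f"
    and fin: "finite (f ` topspace X)"
    and fibres: "\<And>v. v \<in> f ` topspace X \<Longrightarrow> connectedin X {x \<in> topspace X. f x = v}"
  shows "card (connected_components_of X) = card (f ` topspace X)"
proof -
  define fibre where "fibre v = {x \<in> topspace X. f x = v}" for v
  have component_is_fibre: "\<exists>v \<in> f ` topspace X. C = fibre v"
    if C: "C \<in> connected_components_of X" for C
  proof -
    have "C \<noteq> {}" "connectedin X C" "C \<subseteq> topspace X"
      using C nonempty_connected_components_of connectedin_connected_components_of
        connected_components_of_subset by blast+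
    moreover have "connected (f ` C)"
      using connectedin_continuous_map_image[OF cont \<open>connectedin X C\<close>] by simp
    moreover have "finite (f ` C)"
      using fin \<open>C \<subseteq> topspace X\<close> by (meson finite_subset image_mono)
    ultimately obtain v where v: "f ` C = {v}"
      using connected_finite_iff_sing by blast
    then have "v \<in> f ` topspace X" "C \<subseteq> fibre v"
      using \<open>C \<subseteq> topspace X\<close> by (auto simp: fibre_def)
    moreover have "fibre v \<subseteq> C"
    proof (rule connected_components_of_maximal[OF C])
      show "connectedin X (fibre v)"
        using fibres[OF \<open>v \<in> f ` topspace X\<close>] by (simp add: fibre_def)
      show "\<not> disjnt C (fibre v)"
        using \<open>C \<subseteq> fibre v\<close> \<open>C \<noteq> {}\<close> by (auto simp: disjnt_def)
    qed
    ultimately show ?thesis by blast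
  qed
  have fibre_is_component: "fibre (f x) \<in> connected_components_of X" if x: "x \<in> topspace X" for x
  proof -
    have C: "connected_component_of_set X x \<in> connected_components_of X"
      using x by (simp add: connected_component_in_connected_components_of)
    then obtain v where "connected_component_of_set X x = fibre v"
      using component_is_fibre by blast
    moreover have "x \<in> connected_component_of_set X x"
      using x by (simp add: connected_component_of_refl)
    ultimately show ?thesis using C by (auto simp: fibre_def)
  qed
  have "connected_components_of X = fibre ` f ` topspace X"
    using component_is_fibre fibre_is_component by blast
  moreover have "inj_on fibre (f ` topspace X)"
    by (rule inj_onI) (auto simp: fibre_def)
  ultimately show ?thesis by (simp add: card_image)
qed

lemma continuous_map_mult:
  fixes f g :: "'a \<Rightarrow> 'b::real_normed_algebra"
  shows "continuous_map X euclidean f \<Longrightarrow> continuous_map X euclidean g \<Longrightarrow>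
    continuous_map X euclidean (\<lambda>x. f x * g x)"
  by (simp add: continuous_map_atin tendsto_mult)

lemma continuous_map_cnj:
  "continuous_map X euclidean f \<Longrightarrow> continuous_map X euclidean (\<lambda>x. cnj (f x))"
  by (simp add: continuous_map_atin tendsto_cnj)

lemma continuous_map_compose_isCont:
  assumes "continuous_map X euclidean f" "\<And>x. x \<in> topspace X \<Longrightarrow> isCont g (f x)"
  shows "continuous_map X euclidean (\<lambda>x. g (f x))"
  using assms by (auto simp: continuous_map_atin intro: isCont_tendsto_compose)

lemma unit_mult_cnj: "norm z = 1 \<Longrightarrow> z * cnj z = 1"
  by (metis complex_norm_square of_real_1 power_one)

lemma exp_ii_mult_cnj:
  "exp (\<i> * of_real a) * cnj (exp (\<i> * of_real b)) = exp (\<i> * of_real (a - b))"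
  by (simp add: exp_cnj mult_exp_exp algebra_simps)

lemma Arg2pi_exp_ii: "0 \<le> x \<Longrightarrow> x < 2*pi \<Longrightarrow> Arg2pi (exp (\<i> * of_real x)) = x"
  by (subst Arg2pi_exp) auto

lemma exp_ii_neq_1: "0 < x \<Longrightarrow> x < 2*pi \<Longrightarrow> exp (\<i> * of_real x) \<noteq> 1"
  using Arg2pi_exp_ii[of x] Arg2pi_eq_0[of 1] by force

lemma exp_ii_diff_2pi_mult: "exp (\<i> * of_real (x - 2*pi*real m)) = exp (\<i> * of_real x)"
proof -
  have "exp (\<i> * of_real (2*pi*real m)) = 1"
    using exp_integer_2pi[of "of_nat m"] by (simp add: mult_ac)
  then show ?thesis
    by (simp add: right_diff_distrib exp_diff)
qed

lemma exp_Arg2pi_unit: "norm z = 1 \<Longrightarrow> exp (\<i> * of_real (Arg2pi z)) = z"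
  using Arg2pi[of z] unfolding is_Arg_def by simp

lemma mult_exp_Arg2pi_mult_cnj:
  assumes "norm x = 1" "norm y = 1"
  shows "x * exp (\<i> * of_real (Arg2pi (y * cnj x))) = y"
  using assms unit_mult_cnj[of x] by (simp add: exp_Arg2pi_unit norm_mult mult_ac)

lemma mult_cnj_eq_1_iff:
  assumes "norm x = 1"
  shows "y * cnj x = 1 \<longleftrightarrow> y = x"
proof
  assume "y * cnj x = 1"
  have "y = y * (x * cnj x)"
    using unit_mult_cnj[OF assms] by simp
  also have "\<dots> = (y * cnj x) * x"
    by (simp add: mult_ac)
  finally show "y = x"
    using \<open>y * cnj x = 1\<close> by simp
qed (use unit_mult_cnj[OF assms] in simp)

lemma Arg2pi_mult_cnj_pos:
  assumes "norm x = 1" "norm y = 1" "y \<noteq> x"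
  shows "0 < Arg2pi (y * cnj x)"
proof -
  have "y * cnj x \<noteq> 1"
    using assms mult_cnj_eq_1_iff by blast
  moreover have "norm (y * cnj x) = 1"
    using assms by (simp add: norm_mult)
  ultimately show ?thesis
    by (metis Arg2pi less_eq_real_def mult_zero_right of_real_0 exp_zero
        exp_Arg2pi_unit)
qed

section \<open>Configurations on the torus\<close>

lemma topspace_torus: "topspace (torus N) = (\<Pi>\<^sub>E k\<in>{1..N}. sphere 0 1)"
  by (simp add: torus_def)

lemma continuous_map_torus_coordinate:
  "k \<in> {1..N} \<Longrightarrow> continuous_map (torus N) euclidean (\<lambda>\<theta>. \<theta> k)"
  unfolding torus_def
  by (metis continuous_map_product_projection continuous_map_into_fulltopology)

lemma continuous_map_into_torus:
  "continuous_map X (torus N) g \<longleftrightarrow>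
     g ` topspace X \<subseteq> extensional {1..N} \<and>
     (\<forall>k\<in>{1..N}. continuous_map X euclidean (\<lambda>x. g x k) \<and> (\<forall>x\<in>topspace X. norm (g x k) = 1))"
  unfolding torus_def continuous_map_componentwise continuous_map_in_subtopology
  by (simp add: image_subset_iff Pi_iff)

lemma connected_space_torus: "connected_space (torus N)"
proof -
  have "connected (sphere (0::complex) 1)"
    by (rule connected_sphere) simp
  then have "connected_space (top_of_set (sphere (0::complex) 1))"
    by (simp add: connectedin_def flip: connectedin_iff_connected)
  then show ?thesis
    unfolding torus_def connected_space_product_topology by simp
qed

lemma topspace_subtopology_config0:
  "topspace (subtopology (torus N) (config0 N E)) = config0 N E"
  by (auto simp: config0_def)

lemma config0_unit: "\<theta> \<in> config0 N E \<Longrightarrow> k \<in> {1..N} \<Longrightarrow> norm (\<theta> k) = 1"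
  by (auto simp: config0_def topspace_torus)

lemma config0_insert:
  "config0 N (insert {a, b} F) = {\<theta> \<in> config0 N F. \<theta> a \<noteq> \<theta> b}"
  by (auto simp: config0_def doubleton_eq_iff)

lemma simple_graph_edge_vertices:
  "simple_graph N E \<Longrightarrow> {i, j} \<in> E \<Longrightarrow> i \<noteq> j \<and> i \<in> {1..N} \<and> j \<in> {1..N}"
  unfolding simple_graph_def by (fastforce simp: doubleton_eq_iff)

lemma config0_nonempty:
  assumes "simple_graph N E"
  shows "config0 N E \<noteq> {}"
proof -
  define \<theta> where "\<theta> = (\<lambda>k\<in>{1..N}. exp (\<i> * of_real (2*pi*k/N)))"
  have unit: "norm (\<theta> k) = 1" if "k \<in> {1..N}" for k
    using that by (simp add: \<theta>_def)
  have distinct: "\<theta> j \<noteq> \<theta> i" if "i < j" "i \<in> {1..N}" "j \<in> {1..N}" for i j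
  proof -
    define q where "q = (real j - real i) / N"
    define x where "x = 2*pi*q"
    have "0 < q" "q < 1"
      using that by (auto simp: q_def field_simps)
    then have "0 < x" "x < 2*pi"
      using mult_strict_left_mono[of q 1 "2*pi"] by (simp_all add: x_def)
    moreover have "\<theta> j * cnj (\<theta> i) = exp (\<i> * of_real (2*pi*j/N - 2*pi*i/N))"
      unfolding \<theta>_def restrict_apply'[OF that(2)] restrict_apply'[OF that(3)] exp_ii_mult_cnj ..
    moreover have "2*pi*j/N - 2*pi*i/N = x"
      by (simp add: x_def q_def diff_divide_distrib right_diff_distrib)
    ultimately have "\<theta> j * cnj (\<theta> i) \<noteq> 1"
      using exp_ii_neq_1 by simp
    then show ?thesis
      using mult_cnj_eq_1_iff unit that(2) by blast
  qed
  have "\<theta> i \<noteq> \<theta> j" if "{i, j} \<in> E" for i j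
    using simple_graph_edge_vertices[OF assms that] distinct
    by (metis linorder_neqE_nat)
  moreover have "\<theta> \<in> topspace (torus N)"
    using unit by (simp add: topspace_torus \<theta>_def)
  ultimately show ?thesis
    unfolding config0_def by blast
qed

section \<open>Forests\<close>

lemma has_cycle_mono: "has_cycle F \<Longrightarrow> F \<subseteq> E \<Longrightarrow> has_cycle E"
  unfolding has_cycle_def by blast

lemma acyclic_edge_not_reachable:
  assumes acyclic: "\<not> has_cycle (insert {a, b} F)" and new: "{a, b} \<notin> F" and "a \<noteq> b"
  shows "\<not> (\<lambda>x y. {x, y} \<in> F)\<^sup>*\<^sup>* b a"
proof
  assume "(\<lambda>x y. {x, y} \<in> F)\<^sup>*\<^sup>* b a"
  then obtain xs where path: "rtrancl_path (\<lambda>x y. {x, y} \<in> F) b xs a" and "distinct (b # xs)"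
    by (metis rtranclp_eq_rtrancl_path rtrancl_path_distinct)
  have "xs \<noteq> []"
    using path \<open>a \<noteq> b\<close> by (auto elim: rtrancl_path.cases)
  then have "last (b # xs) = a"
    using rtrancl_path_last[OF path] by simp
  have edges: "{(b # xs) ! k, (b # xs) ! (k + 1)} \<in> F" if "k + 1 < length (b # xs)" for k
    using rtrancl_path_nth[OF path, of k] that by simp
  have "xs \<noteq> [a]"
    using edges[of 0] new by (auto simp: insert_commute)
  then have "length (b # xs) \<ge> 3"
    using \<open>xs \<noteq> []\<close> \<open>last (b # xs) = a\<close> by (cases xs) (auto split: if_splits simp: Suc_le_eq)
  then have "has_cycle (insert {a, b} F)"
    unfolding has_cycle_def
    using \<open>distinct (b # xs)\<close> edges \<open>last (b # xs) = a\<close>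
    by (intro exI[of _ "b # xs"]) (auto simp: insert_commute)
  with acyclic show False ..
qed

definition rotate_on :: "nat \<Rightarrow> nat set \<Rightarrow> complex \<Rightarrow> (nat \<Rightarrow> complex) \<Rightarrow> nat \<Rightarrow> complex" where
  "rotate_on N B z \<theta> = (\<lambda>v\<in>{1..N}. if v \<in> B then z * \<theta> v else \<theta> v)"

lemma rotate_on_1: "\<theta> \<in> topspace (torus N) \<Longrightarrow> rotate_on N B 1 \<theta> = \<theta>"
  by (auto simp: rotate_on_def topspace_torus PiE_iff extensional_def)

lemma continuous_map_rotate_on:
  assumes g: "continuous_map X (torus N) g" and z: "continuous_map X euclidean z"
    and unit: "\<And>x. x \<in> topspace X \<Longrightarrow> norm (z x) = 1"
  shows "continuous_map X (torus N) (\<lambda>x. rotate_on N B (z x) (g x))"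
  unfolding continuous_map_into_torus
proof (intro conjI ballI)
  show "(\<lambda>x. rotate_on N B (z x) (g x)) ` topspace X \<subseteq> extensional {1..N}"
    by (auto simp: rotate_on_def)
  fix k assume k: "k \<in> {1..N}"
  then have gk: "continuous_map X euclidean (\<lambda>x. g x k)" "\<And>x. x \<in> topspace X \<Longrightarrow> norm (g x k) = 1"
    using g unfolding continuous_map_into_torus by auto
  show "continuous_map X euclidean (\<lambda>x. rotate_on N B (z x) (g x) k)"
    using k by (cases "k \<in> B") (simp_all add: rotate_on_def gk continuous_map_mult z)
  fix x assume "x \<in> topspace X"
  then show "norm (rotate_on N B (z x) (g x) k) = 1"
    using k gk unit by (simp add: rotate_on_def norm_mult)
qed

lemma rotate_on_in_config0:
  assumes \<theta>: "\<theta> \<in> config0 N F" and z: "norm z = 1" and sg: "simple_graph N F"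
    and closed: "\<And>i j. {i, j} \<in> F \<Longrightarrow> i \<in> B \<longleftrightarrow> j \<in> B"
  shows "rotate_on N B z \<theta> \<in> config0 N F"
proof -
  have "rotate_on N B z \<theta> \<in> topspace (torus N)"
    using \<theta> z by (auto simp: config0_def topspace_torus rotate_on_def norm_mult)
  moreover have "rotate_on N B z \<theta> i \<noteq> rotate_on N B z \<theta> j" if ij: "{i, j} \<in> F" for i j
  proof -
    have "\<theta> i \<noteq> \<theta> j" "z \<noteq> 0"
      using \<theta> ij z by (auto simp: config0_def)
    then show ?thesis
      using simple_graph_edge_vertices[OF sg ij] closed[OF ij] by (auto simp: rotate_on_def)
  qed
  ultimately show ?thesis
    by (simp add: config0_def)
qed

lemma config0_insert_edge_eq_image:
  assumes sg: "simple_graph N F" and a: "a \<in> {1..N}" and b: "b \<in> {1..N}"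
    and closed: "\<And>i j. {i, j} \<in> F \<Longrightarrow> i \<in> B \<longleftrightarrow> j \<in> B"
    and "a \<notin> B" "b \<in> B"
  shows "config0 N (insert {a, b} F) =
    (\<lambda>(\<theta>, t). rotate_on N B (\<theta> a * cnj (\<theta> b) * exp (\<i> * of_real t)) \<theta>) `
      (config0 N F \<times> {0<..<2*pi})"
    (is "_ = ?\<Phi> ` _")
proof (intro equalityI subsetI)
  fix \<theta> assume "\<theta> \<in> config0 N (insert {a, b} F)"
  then have \<theta>: "\<theta> \<in> config0 N F" "\<theta> a \<noteq> \<theta> b"
    by (auto simp: config0_insert)
  have unit: "norm (\<theta> a) = 1" "norm (\<theta> b) = 1"
    using config0_unit \<theta> a b by blast+
  define t where "t = Arg2pi (\<theta> b * cnj (\<theta> a))"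
  have t: "0 < t" "t < 2*pi"
    using Arg2pi_mult_cnj_pos[OF unit] \<theta>(2) Arg2pi by (auto simp: t_def)
  have "\<theta> a * cnj (\<theta> b) * exp (\<i> * of_real t) = (\<theta> a * exp (\<i> * of_real t)) * cnj (\<theta> b)"
    by (simp add: mult_ac)
  also have "\<dots> = 1"
    using mult_exp_Arg2pi_mult_cnj[OF unit] unit_mult_cnj[OF unit(2)] by (simp add: t_def)
  finally have "?\<Phi> (\<theta>, t) = \<theta>"
    using rotate_on_1 \<theta>(1) by (simp add: config0_def)
  then show "\<theta> \<in> ?\<Phi> ` (config0 N F \<times> {0<..<2*pi})"
    using \<theta>(1) t by force
next
  fix \<theta>' assume "\<theta>' \<in> ?\<Phi> ` (config0 N F \<times> {0<..<2*pi})"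
  then obtain \<theta> t where \<theta>: "\<theta> \<in> config0 N F" and t: "0 < t" "t < 2*pi"
    and \<theta>': "\<theta>' = rotate_on N B (\<theta> a * cnj (\<theta> b) * exp (\<i> * of_real t)) \<theta>"
    by auto
  have unit: "norm (\<theta> a) = 1" "norm (\<theta> b) = 1"
    using config0_unit \<theta> a b by blast+
  then have "\<theta>' \<in> config0 N F"
    unfolding \<theta>' by (intro rotate_on_in_config0 \<theta> sg closed) (simp add: norm_mult)
  moreover have "\<theta>' a = \<theta> a"
    using a \<open>a \<notin> B\<close> by (simp add: \<theta>' rotate_on_def)
  moreover have "\<theta>' b = \<theta> a * exp (\<i> * of_real t)"
    using b \<open>b \<in> B\<close> unit_mult_cnj[OF unit(2)] by (simp add: \<theta>' rotate_on_def mult_ac)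
  moreover have "\<theta> a \<noteq> \<theta> a * exp (\<i> * of_real t)"
    using exp_ii_neq_1[OF t] unit(1) by auto
  ultimately show "\<theta>' \<in> config0 N (insert {a, b} F)"
    by (simp add: config0_insert)
qed

lemma connectedin_config0_insert_edge:
  assumes conn: "connectedin (torus N) (config0 N F)"
    and sg: "simple_graph N F" and a: "a \<in> {1..N}" and b: "b \<in> {1..N}"
    and closed: "\<And>i j. {i, j} \<in> F \<Longrightarrow> i \<in> B \<longleftrightarrow> j \<in> B"
    and "a \<notin> B" "b \<in> B"
  shows "connectedin (torus N) (config0 N (insert {a, b} F))"
proof -
  let ?Y = "prod_topology (torus N) euclideanreal"
  let ?\<Phi> = "\<lambda>(\<theta>, t). rotate_on N B (\<theta> a * cnj (\<theta> b) * exp (\<i> * of_real t)) \<theta>"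
  let ?z = "\<lambda>p. fst p a * cnj (fst p b) * exp (\<i> * of_real (snd p))"
  have coord: "continuous_map ?Y euclidean (\<lambda>p. fst p k)" if "k \<in> {1..N}" for k
    using continuous_map_compose[OF continuous_map_fst continuous_map_torus_coordinate[OF that]]
    by (simp add: o_def)
  have "continuous_map ?Y euclidean (\<lambda>p. exp (\<i> * of_real (snd p)))"
    by (rule continuous_map_compose_isCont[OF continuous_map_snd]) (intro continuous_intros)
  then have "continuous_map ?Y euclidean ?z"
    by (intro continuous_map_mult continuous_map_cnj coord a b)
  moreover have "norm (?z p) = 1" if "p \<in> topspace ?Y" for p
    using that a b by (auto simp: topspace_torus norm_mult PiE_iff)
  ultimately have "continuous_map ?Y (torus N) (\<lambda>p. rotate_on N B (?z p) (fst p))"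
    by (intro continuous_map_rotate_on continuous_map_fst)
  then have "continuous_map ?Y (torus N) ?\<Phi>"
    by (simp add: case_prod_beta')
  moreover have "connectedin ?Y (config0 N F \<times> {0<..<2*pi})"
    using conn by (simp add: connectedin_Times connectedin_iff_connected)
  ultimately have "connectedin (torus N) (?\<Phi> ` (config0 N F \<times> {0<..<2*pi}))"
    by (rule connectedin_continuous_map_image)
  then show ?thesis
    by (simp only: config0_insert_edge_eq_image[OF sg a b closed assms(6,7)])
qed

lemma connectedin_config0_forest:
  assumes "finite E" "simple_graph N E" "\<not> has_cycle E"
  shows "connectedin (torus N) (config0 N E)"
  using assms
proof (induction E rule: finite_induct)
  case empty
  have "config0 N {} = topspace (torus N)"
    by (auto simp: config0_def)
  then show ?case
    by (simp add: connectedin_topspace connected_space_torus)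
next
  case (insert e F)
  obtain a b where e: "e = {a, b}" "a \<noteq> b" "a \<in> {1..N}" "b \<in> {1..N}"
    using insert.prems(1) unfolding simple_graph_def by blast
  have sg: "simple_graph N F"
    using insert.prems(1) by (simp add: simple_graph_def)
  have "\<not> has_cycle F"
    using insert.prems(2) has_cycle_mono by blast
  define B where "B = {v. (\<lambda>x y. {x, y} \<in> F)\<^sup>*\<^sup>* b v}"
  have closed: "i \<in> B \<longleftrightarrow> j \<in> B" if "{i, j} \<in> F" for i j
  proof -
    have "{i, j} \<in> F" "{j, i} \<in> F"
      using that by (simp_all add: insert_commute)
    then show ?thesis
      unfolding B_def by (auto intro: rtranclp.rtrancl_into_rtrancl)
  qed
  have "a \<notin> B"
    using acyclic_edge_not_reachable insert.prems(2) insert.hyps(2) e by (simp add: B_def)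
  moreover have "b \<in> B"
    by (simp add: B_def)
  ultimately show ?case
    using connectedin_config0_insert_edge[OF insert.IH[OF sg \<open>\<not> has_cycle F\<close>] sg e(3,4) closed]
      e(1) by blast
qed

lemma R0_tree:
  assumes "is_tree N E"
  shows "R0 N E = 1"
proof -
  have sg: "simple_graph N E" and "\<not> has_cycle E"
    using assms by (auto simp: is_tree_def)
  have "E \<subseteq> Pow {1..N}"
    using sg unfolding simple_graph_def by auto
  then have "finite E"
    by (rule finite_subset) simp
  let ?X = "subtopology (torus N) (config0 N E)"
  have "connected_space ?X"
    using connectedin_config0_forest[OF \<open>finite E\<close> sg \<open>\<not> has_cycle E\<close>]
    by (rule connected_space_subtopology)
  moreover have "?X \<noteq> trivial_topology"
    using config0_nonempty[OF sg] topspace_subtopology_config0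
    by (metis null_topspace_iff_trivial)
  ultimately show ?thesis
    unfolding R0_def by (simp add: connected_components_of_connected_space)
qed

section \<open>Cycles\<close>

definition cycle_next :: "nat \<Rightarrow> nat \<Rightarrow> nat" where
  "cycle_next N k = (if k = N then 1 else Suc k)"

definition cycle_angle :: "nat \<Rightarrow> (nat \<Rightarrow> complex) \<Rightarrow> nat \<Rightarrow> real" where
  "cycle_angle N \<theta> k = Arg2pi (\<theta> (cycle_next N k) * cnj (\<theta> k))"

definition winding :: "nat \<Rightarrow> (nat \<Rightarrow> complex) \<Rightarrow> real" where
  "winding N \<theta> = (\<Sum>k=1..N. cycle_angle N \<theta> k)"

definition cycle_config :: "nat \<Rightarrow> complex \<Rightarrow> (nat \<Rightarrow> real) \<Rightarrow> nat \<Rightarrow> complex" where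
  "cycle_config N z \<beta> = (\<lambda>k\<in>{1..N}. z * exp (\<i> * of_real (\<Sum>j=1..<k. \<beta> j)))"

lemma cycle_next_mem: "k \<in> {1..N} \<Longrightarrow> cycle_next N k \<in> {1..N}"
  by (auto simp: cycle_next_def)

lemma cycle_graph_eq: "N \<ge> 1 \<Longrightarrow> cycle_graph N = (\<lambda>k. {k, cycle_next N k}) ` {1..N}"
  unfolding cycle_graph_def cycle_next_def by (auto simp: image_iff) force+

lemma config0_cycle_graph:
  assumes "N \<ge> 1"
  shows "config0 N (cycle_graph N) =
    {\<theta> \<in> topspace (torus N). \<forall>k\<in>{1..N}. \<theta> (cycle_next N k) \<noteq> \<theta> k}"
proof -
  have "(\<forall>i j. {i, j} \<in> (\<lambda>k. {k, cycle_next N k}) ` {1..N} \<longrightarrow> \<theta> i \<noteq> \<theta> j) \<longleftrightarrow>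
      (\<forall>k\<in>{1..N}. \<theta> (cycle_next N k) \<noteq> \<theta> k)" for \<theta> :: "nat \<Rightarrow> complex"
  proof
    assume edges: "\<forall>i j. {i, j} \<in> (\<lambda>k. {k, cycle_next N k}) ` {1..N} \<longrightarrow> \<theta> i \<noteq> \<theta> j"
    show "\<forall>k\<in>{1..N}. \<theta> (cycle_next N k) \<noteq> \<theta> k"
    proof
      fix k assume "k \<in> {1..N}"
      then have "{cycle_next N k, k} \<in> (\<lambda>k. {k, cycle_next N k}) ` {1..N}"
        by (auto simp: insert_commute)
      then show "\<theta> (cycle_next N k) \<noteq> \<theta> k"
        using edges by blast
    qed
  next
    assume steps: "\<forall>k\<in>{1..N}. \<theta> (cycle_next N k) \<noteq> \<theta> k"
    show "\<forall>i j. {i, j} \<in> (\<lambda>k. {k, cycle_next N k}) ` {1..N} \<longrightarrow> \<theta> i \<noteq> \<theta> j"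
    proof (intro allI impI)
      fix i j assume "{i, j} \<in> (\<lambda>k. {k, cycle_next N k}) ` {1..N}"
      then obtain k where "k \<in> {1..N}" "{i, j} = {k, cycle_next N k}"
        by blast
      then show "\<theta> i \<noteq> \<theta> j"
        using steps by (metis doubleton_eq_iff)
    qed
  qed
  then show ?thesis
    unfolding config0_def cycle_graph_eq[OF assms] by simp
qed

lemma cycle_config_mult_cnj:
  assumes "N \<ge> 1" and z: "norm z = 1" and k: "k \<in> {1..N}"
    and sum: "(\<Sum>j=1..N. \<beta> j) = 2*pi*real m"
  shows "cycle_config N z \<beta> (cycle_next N k) * cnj (cycle_config N z \<beta> k) = exp (\<i> * of_real (\<beta> k))"
proof -
  define S where "S k = (\<Sum>j=1..<k. \<beta> j)" for k
  have diff: "S (cycle_next N k) - S k = \<beta> k - (if k = N then 2*pi*real m else 0)"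
  proof (cases "k = N")
    case True
    then have "S N = 2*pi*real m - \<beta> N"
      using sum assms(1) sum.atLeastLessThan_Suc[of 1 N \<beta>]
      by (simp add: S_def atLeastLessThanSuc_atLeastAtMost)
    then show ?thesis
      using True by (simp add: S_def cycle_next_def)
  next
    case False
    then show ?thesis
      using k by (simp add: S_def cycle_next_def)
  qed
  have "cycle_config N z \<beta> (cycle_next N k) * cnj (cycle_config N z \<beta> k) =
      z * exp (\<i> * of_real (S (cycle_next N k))) * cnj (z * exp (\<i> * of_real (S k)))"
    using k cycle_next_mem[OF k] by (simp add: cycle_config_def S_def del: of_real_sum)
  also have "\<dots> = (z * cnj z) *
      (exp (\<i> * of_real (S (cycle_next N k))) * cnj (exp (\<i> * of_real (S k))))"
    by (simp add: mult_ac)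
  also have "\<dots> = exp (\<i> * of_real (S (cycle_next N k) - S k))"
    by (simp only: unit_mult_cnj[OF z] exp_ii_mult_cnj mult_1_left)
  also have "\<dots> = exp (\<i> * of_real (\<beta> k))"
    using diff exp_ii_diff_2pi_mult[of "\<beta> k" m] by (cases "k = N") simp_all
  finally show ?thesis .
qed

lemma cycle_config_in_config0:
  assumes N: "N \<ge> 1" and z: "norm z = 1"
    and \<beta>: "\<And>j. j \<in> {1..N} \<Longrightarrow> 0 < \<beta> j \<and> \<beta> j < 2*pi"
    and sum: "(\<Sum>j=1..N. \<beta> j) = 2*pi*real m"
  shows "cycle_config N z \<beta> \<in> config0 N (cycle_graph N)"
    and "winding N (cycle_config N z \<beta>) = 2*pi*real m"
proof -
  have unit: "norm (cycle_config N z \<beta> k) = 1" if "k \<in> {1..N}" for k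
    using that z by (simp add: cycle_config_def norm_mult)
  note step = cycle_config_mult_cnj[OF N z _ sum]
  have "cycle_config N z \<beta> (cycle_next N k) \<noteq> cycle_config N z \<beta> k" if k: "k \<in> {1..N}" for k
    using step[OF k] exp_ii_neq_1 \<beta>[OF k] mult_cnj_eq_1_iff[OF unit[OF k]] by metis
  moreover have "cycle_config N z \<beta> \<in> topspace (torus N)"
    using unit by (simp add: topspace_torus cycle_config_def)
  ultimately show "cycle_config N z \<beta> \<in> config0 N (cycle_graph N)"
    by (simp add: config0_cycle_graph[OF N])
  have "winding N (cycle_config N z \<beta>) = (\<Sum>k=1..N. \<beta> k)"
    unfolding winding_def cycle_angle_def
    by (rule sum.cong[OF refl]) (simp add: step Arg2pi_exp_ii \<beta> less_imp_le)
  then show "winding N (cycle_config N z \<beta>) = 2*pi*real m"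
    using sum by simp
qed

lemma cycle_angle_bounds:
  assumes "N \<ge> 1" "\<theta> \<in> config0 N (cycle_graph N)" "k \<in> {1..N}"
  shows "0 < cycle_angle N \<theta> k" "cycle_angle N \<theta> k < 2*pi"
proof -
  have "norm (\<theta> k) = 1" "norm (\<theta> (cycle_next N k)) = 1"
    using assms config0_unit cycle_next_mem by blast+
  moreover have "\<theta> (cycle_next N k) \<noteq> \<theta> k"
    using assms by (simp add: config0_cycle_graph)
  ultimately show "0 < cycle_angle N \<theta> k"
    by (simp add: cycle_angle_def Arg2pi_mult_cnj_pos)
  show "cycle_angle N \<theta> k < 2*pi"
    using Arg2pi by (simp add: cycle_angle_def)
qed

lemma cycle_next_eq_mult_exp_angle:
  assumes "\<theta> \<in> config0 N E" "k \<in> {1..N}"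
  shows "\<theta> (cycle_next N k) = \<theta> k * exp (\<i> * of_real (cycle_angle N \<theta> k))"
  using assms mult_exp_Arg2pi_mult_cnj config0_unit cycle_next_mem
  unfolding cycle_angle_def by metis

lemma config0_eq_mult_exp_angle_sum:
  assumes \<theta>: "\<theta> \<in> config0 N E"
  shows "k \<in> {1..N} \<Longrightarrow> \<theta> k = \<theta> 1 * exp (\<i> * of_real (\<Sum>j=1..<k. cycle_angle N \<theta> j))"
proof (induction k)
  case 0
  then show ?case by simp
next
  case (Suc k)
  show ?case
  proof (cases "k = 0")
    case True
    then show ?thesis by simp
  next
    case False
    then have k: "k \<in> {1..N}" "cycle_next N k = Suc k"
      using Suc.prems by (auto simp: cycle_next_def)
    have "\<theta> (Suc k) = \<theta> k * exp (\<i> * of_real (cycle_angle N \<theta> k))"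
      using cycle_next_eq_mult_exp_angle[OF \<theta> k(1)] k(2) by simp
    also have "\<dots> = \<theta> 1 * exp (\<i> * of_real ((\<Sum>j=1..<k. cycle_angle N \<theta> j) + cycle_angle N \<theta> k))"
      using Suc.IH[OF k(1)] by (simp add: exp_add distrib_left mult_ac del: of_real_sum)
    also have "(\<Sum>j=1..<k. cycle_angle N \<theta> j) + cycle_angle N \<theta> k = (\<Sum>j=1..<Suc k. cycle_angle N \<theta> j)"
      using k by simp
    finally show ?thesis .
  qed
qed

lemma cycle_config_angles:
  assumes \<theta>: "\<theta> \<in> config0 N E"
  shows "cycle_config N (\<theta> 1) (cycle_angle N \<theta>) = \<theta>"
proof
  fix k
  show "cycle_config N (\<theta> 1) (cycle_angle N \<theta>) k = \<theta> k"
  proof (cases "k \<in> {1..N}")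
    case True
    then show ?thesis
      using config0_eq_mult_exp_angle_sum[OF \<theta> True] by (simp add: cycle_config_def)
  next
    case False
    then show ?thesis
      using \<theta> by (auto simp: cycle_config_def config0_def topspace_torus PiE_def extensional_def)
  qed
qed

lemma winding_eq_2pi_mult:
  assumes N: "N \<ge> 1" and \<theta>: "\<theta> \<in> config0 N (cycle_graph N)"
  obtains m :: nat where "1 \<le> m" "m \<le> N - 1" "winding N \<theta> = 2*pi*real m"
proof -
  have NN: "N \<in> {1..N}"
    using N by simp
  have "\<theta> 1 = \<theta> N * exp (\<i> * of_real (cycle_angle N \<theta> N))"
    using cycle_next_eq_mult_exp_angle[OF \<theta> NN] by (simp add: cycle_next_def)
  also have "\<dots> = \<theta> 1 * exp (\<i> * of_real ((\<Sum>j=1..<N. cycle_angle N \<theta> j) + cycle_angle N \<theta> N))"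
    using config0_eq_mult_exp_angle_sum[OF \<theta> NN] by (simp add: exp_add distrib_left mult_ac del: of_real_sum)
  also have "(\<Sum>j=1..<N. cycle_angle N \<theta> j) + cycle_angle N \<theta> N = winding N \<theta>"
    unfolding winding_def using N sum.atLeastLessThan_Suc[of 1 N "cycle_angle N \<theta>"]
    by (simp add: atLeastLessThanSuc_atLeastAtMost)
  finally have "\<theta> 1 = \<theta> 1 * exp (\<i> * of_real (winding N \<theta>))" .
  moreover have "\<theta> 1 \<noteq> 0"
    using config0_unit[OF \<theta>] N by fastforce
  ultimately have "exp (\<i> * of_real (winding N \<theta>)) = 1"
    by (metis mult_cancel_left1)
  then obtain n :: int where n: "winding N \<theta> = 2 * pi * of_int n"
    by (auto simp: exp_eq_1 mult_ac)
  have "0 < winding N \<theta>"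
    unfolding winding_def using N cycle_angle_bounds[OF N \<theta>] by (intro sum_pos) auto
  moreover have "winding N \<theta> < (\<Sum>k=1..N. 2*pi)"
    unfolding winding_def using N cycle_angle_bounds[OF N \<theta>] by (intro sum_strict_mono) auto
  ultimately have "0 < n" "n < int N"
    using n by (simp_all add: zero_less_mult_iff mult_ac)
  then show ?thesis
    using n by (intro that[of "nat n"]) auto
qed

lemma continuous_map_winding:
  assumes N: "N \<ge> 1"
  shows "continuous_map (subtopology (torus N) (config0 N (cycle_graph N))) euclideanreal (winding N)"
  unfolding winding_def[abs_def]
proof (rule continuous_map_sum)
  let ?X = "subtopology (torus N) (config0 N (cycle_graph N))"
  fix k assume k: "k \<in> {1..N}"
  have "continuous_map ?X euclidean (\<lambda>\<theta>. \<theta> (cycle_next N k) * cnj (\<theta> k))"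
    by (intro continuous_map_mult continuous_map_cnj continuous_map_from_subtopology
        continuous_map_torus_coordinate k cycle_next_mem)
  then show "continuous_map ?X euclidean (\<lambda>\<theta>. cycle_angle N \<theta> k)"
    unfolding cycle_angle_def
  proof (rule continuous_map_compose_isCont)
    fix \<theta> assume "\<theta> \<in> topspace ?X"
    then have "0 < Arg2pi (\<theta> (cycle_next N k) * cnj (\<theta> k))"
      using cycle_angle_bounds[OF N _ k] by (simp add: topspace_subtopology_config0 cycle_angle_def)
    then have "\<theta> (cycle_next N k) * cnj (\<theta> k) \<notin> \<real>\<^sub>\<ge>\<^sub>0"
      using Arg2pi_eq_0 complex_nonneg_Reals_iff complex_is_Real_iff by (metis less_irrefl)
    then show "isCont Arg2pi (\<theta> (cycle_next N k) * cnj (\<theta> k))"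
      by (rule continuous_at_Arg2pi)
  qed
qed simp

lemma continuous_map_cycle_config:
  assumes z: "continuous_map X euclidean z" and unit: "\<And>x. x \<in> topspace X \<Longrightarrow> norm (z x) = 1"
    and \<beta>: "\<And>j. continuous_map X euclideanreal (\<lambda>x. \<beta> x j)"
  shows "continuous_map X (torus N) (\<lambda>x. cycle_config N (z x) (\<beta> x))"
  unfolding continuous_map_into_torus
proof (intro conjI ballI)
  show "(\<lambda>x. cycle_config N (z x) (\<beta> x)) ` topspace X \<subseteq> extensional {1..N}"
    by (auto simp: cycle_config_def)
  fix k assume k: "k \<in> {1..N}"
  have "continuous_map X euclideanreal (\<lambda>x. \<Sum>j=1..<k. \<beta> x j)"
    by (intro continuous_map_sum \<beta>) simp
  then have "continuous_map X euclidean (\<lambda>x. exp (\<i> * of_real (\<Sum>j=1..<k. \<beta> x j)))"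
    by (rule continuous_map_compose_isCont) (intro continuous_intros)
  moreover have "(\<lambda>x. cycle_config N (z x) (\<beta> x) k) =
      (\<lambda>x. z x * exp (\<i> * of_real (\<Sum>j=1..<k. \<beta> x j)))"
    using k by (simp add: cycle_config_def fun_eq_iff del: of_real_sum)
  ultimately show "continuous_map X euclidean (\<lambda>x. cycle_config N (z x) (\<beta> x) k)"
    using continuous_map_mult[OF z] by simp
  fix x assume "x \<in> topspace X"
  then show "norm (cycle_config N (z x) (\<beta> x) k) = 1"
    using k unit by (simp add: cycle_config_def norm_mult)
qed

lemma path_connectedin_winding_fibre:
  assumes N: "N \<ge> 1"
  shows "path_connectedin (subtopology (torus N) (config0 N (cycle_graph N)))
    {\<theta> \<in> config0 N (cycle_graph N). winding N \<theta> = w}"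
    (is "path_connectedin ?X ?F")
  unfolding path_connectedin topspace_subtopology_config0
proof (intro conjI ballI)
  show "?F \<subseteq> config0 N (cycle_graph N)"
    by blast
  fix \<theta> \<theta>' assume "\<theta> \<in> ?F" "\<theta>' \<in> ?F"
  then have \<theta>: "\<theta> \<in> config0 N (cycle_graph N)" "winding N \<theta> = w"
    and \<theta>': "\<theta>' \<in> config0 N (cycle_graph N)" "winding N \<theta>' = w"
    by auto
  obtain m where w: "w = 2*pi*real m"
    using winding_eq_2pi_mult[OF N \<theta>(1)] \<theta>(2) by metis
  have unit: "norm (\<theta> 1) = 1" "norm (\<theta>' 1) = 1"
    using config0_unit \<theta>(1) \<theta>'(1) N by auto
  define z where "z t = \<theta> 1 * exp (\<i> * of_real (t * Arg2pi (\<theta>' 1 * cnj (\<theta> 1))))" for t :: real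
  define \<beta> where "\<beta> t j = (1 - t) * cycle_angle N \<theta> j + t * cycle_angle N \<theta>' j" for t :: real and j
  define g where "g t = cycle_config N (z t) (\<beta> t)" for t
  have z_unit: "norm (z t) = 1" for t
    using unit by (simp add: z_def norm_mult)
  have g_fibre: "g t \<in> ?F" if t: "t \<in> {0..1}" for t
  proof -
    have "\<beta> t j \<in> {0<..<2*pi}" if j: "j \<in> {1..N}" for j
      using convexD[of "{0<..<2*pi}" "cycle_angle N \<theta> j" "cycle_angle N \<theta>' j" "1 - t" t] t
        cycle_angle_bounds[OF N \<theta>(1) j] cycle_angle_bounds[OF N \<theta>'(1) j]
      by (simp add: \<beta>_def)
    moreover have "(\<Sum>j=1..N. \<beta> t j) = (1 - t) * winding N \<theta> + t * winding N \<theta>'"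
      by (simp add: \<beta>_def winding_def sum.distrib sum_distrib_left)
    then have "(\<Sum>j=1..N. \<beta> t j) = 2*pi*real m"
      using \<theta>(2) \<theta>'(2) w by (simp add: algebra_simps)
    ultimately show ?thesis
      using cycle_config_in_config0[OF N z_unit] w by (simp add: g_def)
  qed
  have "continuous_on {0..1} z" "continuous_on {0..1} (\<lambda>t. \<beta> t j)" for j
    by (auto simp: z_def \<beta>_def intro!: continuous_intros)
  then have "continuous_map (top_of_set {0..1}) (torus N) g"
    unfolding g_def by (intro continuous_map_cycle_config z_unit) simp_all
  then have "pathin ?X g"
    unfolding pathin_def using g_fibre by (intro continuous_map_into_subtopology) auto
  moreover have "z 0 = \<theta> 1" "\<beta> 0 = cycle_angle N \<theta>"
    by (simp_all add: z_def \<beta>_def fun_eq_iff)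
  then have "g 0 = \<theta>"
    using cycle_config_angles[OF \<theta>(1)] by (simp add: g_def)
  moreover have "z 1 = \<theta>' 1" "\<beta> 1 = cycle_angle N \<theta>'"
    using mult_exp_Arg2pi_mult_cnj[OF unit] by (simp_all add: z_def \<beta>_def fun_eq_iff)
  then have "g 1 = \<theta>'"
    using cycle_config_angles[OF \<theta>'(1)] by (simp add: g_def)
  ultimately show "\<exists>g. pathin ?X g \<and> g \<in> {0..1} \<rightarrow> ?F \<and> g 0 = \<theta> \<and> g 1 = \<theta>'"
    using g_fibre by blast
qed

lemma winding_image:
  assumes N: "N \<ge> 1"
  shows "winding N ` config0 N (cycle_graph N) = (\<lambda>m. 2*pi*real m) ` {1..N-1}"
proof (intro equalityI subsetI)
  fix w assume "w \<in> winding N ` config0 N (cycle_graph N)"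
  then obtain \<theta> where \<theta>: "\<theta> \<in> config0 N (cycle_graph N)" "w = winding N \<theta>"
    by blast
  obtain m where "1 \<le> m" "m \<le> N - 1" "winding N \<theta> = 2*pi*real m"
    by (rule winding_eq_2pi_mult[OF N \<theta>(1)])
  then show "w \<in> (\<lambda>m. 2*pi*real m) ` {1..N-1}"
    using \<theta>(2) by (intro image_eqI[of _ _ m]) auto
next
  fix w assume "w \<in> (\<lambda>m. 2*pi*real m) ` {1..N-1}"
  then obtain m where m: "m \<in> {1..N-1}" "w = 2*pi*real m"
    by blast
  define \<beta> where "\<beta> j = 2*pi*real m / real N" for j :: nat
  have "0 < \<beta> j \<and> \<beta> j < 2*pi" for j
    using m N by (auto simp: \<beta>_def field_simps)
  moreover have "(\<Sum>j=1..N. \<beta> j) = 2*pi*real m"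
    using N by (simp add: \<beta>_def)
  ultimately show "w \<in> winding N ` config0 N (cycle_graph N)"
    using cycle_config_in_config0[OF N, of 1 \<beta> m] m(2) by force
qed

lemma R0_cycle_graph:
  assumes N: "N \<ge> 1"
  shows "R0 N (cycle_graph N) = N - 1"
proof -
  let ?X = "subtopology (torus N) (config0 N (cycle_graph N))"
  have "R0 N (cycle_graph N) = card (winding N ` topspace ?X)"
    unfolding R0_def
  proof (rule card_connected_components_of_eq_card_image[OF continuous_map_winding[OF N]])
    show "finite (winding N ` topspace ?X)"
      unfolding topspace_subtopology_config0 winding_image[OF N] by simp
    show "connectedin ?X {\<theta> \<in> topspace ?X. winding N \<theta> = w}" for w
      unfolding topspace_subtopology_config0
      by (rule path_connectedin_imp_connectedin[OF path_connectedin_winding_fibre[OF N]])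
  qed
  also have "\<dots> = card ((\<lambda>m. 2*pi*real m) ` {1..N-1})"
    unfolding topspace_subtopology_config0 winding_image[OF N] ..
  also have "\<dots> = N - 1"
    by (simp add: card_image inj_on_def)
  finally show ?thesis .
qed

theorem proposition1:
  shows "(\<forall>N E. N \<ge> 1 \<longrightarrow> is_tree N E \<longrightarrow> R0 N E = 1) \<and>
         (\<forall>N. N \<ge> 3 \<longrightarrow> R0 N (cycle_graph N) = N - 1)"
  using R0_tree R0_cycle_graph by simp

end
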